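(* There exists a Heffter array $H(n;k)$ for all $n\equiv 1,3 \pmod 4$ and $k\equiv 2\pmod 4$ with $n>k\ge 6$.
   Context: A Heffter array $H(n;k)$ is an $n\times n$ array in which some cells are filled with nonzero integers and the others are empty, such that: each row and each column contains exactly $k$ filled cells; the entries of every row and of every column sum to $0$ modulo $2nk+1$; and for each integer $1\le x\le nk$, exactly one of $x$ or $-x$ appears in the array, and it appears exactly once. *)

theory Defs
  imports Main
begin

text \<open>An n x n partially filled array: cell (i,j) with i,j < n is either empty (None)
  or filled with an integer (Some v). Values outside the range i,j < n are irrelevant.\<close>
type_synonym parray = "nat \<Rightarrow> nat \<Rightarrow> int option"

definition filled_row :: "parray \<Rightarrow> nat \<Rightarrow> nat \<Rightarrow> nat set" where
  "filled_row A n i = {j. j < n \<and> A i j \<noteq> None}"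

definition filled_col :: "parray \<Rightarrow> nat \<Rightarrow> nat \<Rightarrow> nat set" where
  "filled_col A n j = {i. i < n \<and> A i j \<noteq> None}"

definition entry :: "parray \<Rightarrow> nat \<Rightarrow> nat \<Rightarrow> int" where
  "entry A i j = (case A i j of None \<Rightarrow> 0 | Some v \<Rightarrow> v)"

definition is_heffter :: "nat \<Rightarrow> nat \<Rightarrow> parray \<Rightarrow> bool" where
  "is_heffter n k A \<longleftrightarrow>
     (\<forall>i<n. card (filled_row A n i) = k) \<and>
     (\<forall>j<n. card (filled_col A n j) = k) \<and>
     (\<forall>i<n. (\<Sum>j\<in>filled_row A n i. entry A i j) mod int (2*n*k+1) = 0) \<and>
     (\<forall>j<n. (\<Sum>i\<in>filled_col A n j. entry A i j) mod int (2*n*k+1) = 0) \<and>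
     (\<forall>i<n. \<forall>j<n. \<forall>v. A i j = Some v \<longrightarrow> v \<noteq> 0 \<and> \<bar>v\<bar> \<le> int (n*k)) \<and>
     (\<forall>x::int. 1 \<le> x \<and> x \<le> int (n*k) \<longrightarrow>
        (\<exists>!(i,j). i < n \<and> j < n \<and> (A i j = Some x \<or> A i j = Some (-x))))"

end

theory Submission
  imports Defs
begin

text \<open>The array is circulant: cell \<open>(i, j)\<close> is filled iff its cyclic diagonal \<open>(j - i) mod n\<close>
  lies in \<open>D = {0, 1, 2, 3, 4, 6} \<union> {7..k}\<close>, so every row and column has \<open>k\<close> filled cells.
  The diagonals are mapped bijectively onto the blocks \<open>{b n + 1 .. (b + 1) n}\<close>, \<open>b < k\<close>, and the
  magnitudes run cyclically along each diagonal, so every \<open>x \<le> n k\<close> occurs exactly once up to sign.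
  Signs and cyclic shifts are chosen so that in every row and every column the diagonals
  \<open>0, 1, 2, 3, 4, 6\<close> contribute exactly \<open>2 n k + 1\<close> and each quadruple \<open>7 + 4 g .. 10 + 4 g\<close>
  contributes \<open>0\<close>: the cyclic offsets cancel in pairs. Only \<open>k \<equiv> 2 (mod 4)\<close> and \<open>6 \<le> k < n\<close> are
  used.\<close>

lemma of_nat_cyclic_diff:
  fixes a c n :: nat
  assumes "c \<le> n"
  shows "int ((a + n - c) mod n) = (int a - int c) mod int n"
proof -
  have shift: "int (a + n - c) = (int a - int c) + int n"
    using assms by simp
  have "int ((a + n - c) mod n) = int (a + n - c) mod int n"
    by (simp only: of_nat_mod)
  also have "\<dots> = ((int a - int c) + int n) mod int n"
    by (simp only: shift)
  also have "\<dots> = (int a - int c) mod int n"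
    by (rule mod_add_self2)
  finally show ?thesis .
qed

lemma cyclic_diff_cyclic_diff:
  fixes a c n j :: nat
  assumes "a + c \<le> n"
  shows "((j + n - a) mod n + n - c) mod n = (j + n - (a + c)) mod n"
proof -
  have "int (((j + n - a) mod n + n - c) mod n) = (int ((j + n - a) mod n) - int c) mod int n"
    using assms by (intro of_nat_cyclic_diff) simp
  also have "\<dots> = ((int j - int a) mod int n - int c) mod int n"
    using assms by (simp add: of_nat_cyclic_diff)
  also have "\<dots> = (int j - int (a + c)) mod int n"
    by (simp add: mod_diff_left_eq algebra_simps)
  also have "\<dots> = int ((j + n - (a + c)) mod n)"
    using assms by (simp add: of_nat_cyclic_diff)
  finally show ?thesis by simp
qed

lemma cyclic_diff_add_mod:
  fixes i d n :: nat
  assumes "i < n" "d < n"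
  shows "((i + d) mod n + n - i) mod n = d"
proof -
  have "int (((i + d) mod n + n - i) mod n) = (int ((i + d) mod n) - int i) mod int n"
    using assms by (simp add: of_nat_cyclic_diff)
  also have "\<dots> = int d"
    using assms by (simp add: of_nat_mod mod_diff_left_eq)
  finally show ?thesis by simp
qed

lemma add_cyclic_diff_mod:
  fixes i j n :: nat
  assumes "i < n" "j < n"
  shows "(i + (j + n - i) mod n) mod n = j"
proof -
  have "int ((i + (j + n - i) mod n) mod n) = (int i + int ((j + n - i) mod n)) mod int n"
    by (simp add: of_nat_mod)
  also have "\<dots> = (int i + (int j - int i) mod int n) mod int n"
    using assms by (simp add: of_nat_cyclic_diff)
  also have "\<dots> = int j"
    using assms by (simp add: mod_add_right_eq)
  finally show ?thesis by simp
qed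

lemma cyclic_diff_cyclic_diff_self:
  fixes j d n :: nat
  assumes "j < n" "d < n"
  shows "(j + n - (j + n - d) mod n) mod n = d"
proof -
  have "int ((j + n - (j + n - d) mod n) mod n) = (int j - (int j - int d) mod int n) mod int n"
    using assms by (simp add: of_nat_cyclic_diff)
  also have "\<dots> = int d"
    using assms by (simp add: mod_diff_right_eq)
  finally show ?thesis by simp
qed

text \<open>\<open>v i d\<close> is the entry of row \<open>i\<close> on the cyclic diagonal \<open>d\<close>, i.e. in column \<open>(i + d) mod n\<close>;
  \<open>(j + n - i) mod n\<close> is \<open>(j - i) mod n\<close> written without truncated subtraction.\<close>

definition circulant :: "nat \<Rightarrow> nat set \<Rightarrow> (nat \<Rightarrow> nat \<Rightarrow> int) \<Rightarrow> parray" where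
  "circulant n D v = (\<lambda>i j. if i < n \<and> j < n \<and> (j + n - i) mod n \<in> D
                              then Some (v i ((j + n - i) mod n)) else None)"

lemma circulant_eq_Some_iff:
  "circulant n D v i j = Some x \<longleftrightarrow>
     i < n \<and> j < n \<and> (j + n - i) mod n \<in> D \<and> x = v i ((j + n - i) mod n)"
  by (auto simp: circulant_def)

lemma circulant_on_diagonal:
  assumes "i < n" "d \<in> D" "D \<subseteq> {..<n}"
  shows "circulant n D v i ((i + d) mod n) = Some (v i d)"
  using assms by (auto simp: circulant_def cyclic_diff_add_mod)

lemma filled_row_circulant:
  assumes "i < n" "D \<subseteq> {..<n}"
  shows "filled_row (circulant n D v) n i = (\<lambda>d. (i + d) mod n) ` D"
proof (intro equalityI subsetI)
  fix j assume "j \<in> filled_row (circulant n D v) n i"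
  then have "j < n" "(j + n - i) mod n \<in> D"
    by (auto simp: filled_row_def circulant_def split: if_splits)
  then show "j \<in> (\<lambda>d. (i + d) mod n) ` D"
    using assms add_cyclic_diff_mod by (metis image_eqI)
next
  fix j assume "j \<in> (\<lambda>d. (i + d) mod n) ` D"
  then obtain d where "d \<in> D" "j = (i + d) mod n" by blast
  then show "j \<in> filled_row (circulant n D v) n i"
    using assms circulant_on_diagonal[of i n d D v] by (simp add: filled_row_def)
qed

lemma filled_col_circulant:
  assumes "j < n" "D \<subseteq> {..<n}"
  shows "filled_col (circulant n D v) n j = (\<lambda>d. (j + n - d) mod n) ` D"
proof (intro equalityI subsetI)
  fix i assume "i \<in> filled_col (circulant n D v) n j"
  then have "i < n" "(j + n - i) mod n \<in> D"
    by (auto simp: filled_col_def circulant_def split: if_splits)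
  then show "i \<in> (\<lambda>d. (j + n - d) mod n) ` D"
    using assms cyclic_diff_cyclic_diff_self by (metis image_eqI)
next
  fix i assume "i \<in> (\<lambda>d. (j + n - d) mod n) ` D"
  then obtain d where "d \<in> D" "i = (j + n - d) mod n" by blast
  then show "i \<in> filled_col (circulant n D v) n j"
    using assms cyclic_diff_cyclic_diff_self[of j n d]
    by (auto simp: filled_col_def circulant_def)
qed

lemma inj_on_add_mod:
  fixes n :: nat
  assumes "i < n" "D \<subseteq> {..<n}"
  shows "inj_on (\<lambda>d. (i + d) mod n) D"
  by (rule inj_on_inverseI[where g = "\<lambda>j. (j + n - i) mod n"])
     (use assms cyclic_diff_add_mod in blast)

lemma inj_on_cyclic_diff:
  fixes n :: nat
  assumes "j < n" "D \<subseteq> {..<n}"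
  shows "inj_on (\<lambda>d. (j + n - d) mod n) D"
  by (rule inj_on_inverseI[where g = "\<lambda>i. (j + n - i) mod n"])
     (use assms cyclic_diff_cyclic_diff_self in blast)

lemma card_filled_row_circulant:
  "i < n \<Longrightarrow> D \<subseteq> {..<n} \<Longrightarrow> card (filled_row (circulant n D v) n i) = card D"
  by (simp add: filled_row_circulant card_image inj_on_add_mod)

lemma card_filled_col_circulant:
  "j < n \<Longrightarrow> D \<subseteq> {..<n} \<Longrightarrow> card (filled_col (circulant n D v) n j) = card D"
  by (simp add: filled_col_circulant card_image inj_on_cyclic_diff)

lemma row_sum_circulant:
  assumes "i < n" "D \<subseteq> {..<n}"
  shows "(\<Sum>j\<in>filled_row (circulant n D v) n i. entry (circulant n D v) i j) = (\<Sum>d\<in>D. v i d)"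
  using assms
  by (simp add: filled_row_circulant sum.reindex inj_on_add_mod entry_def circulant_on_diagonal)

lemma col_sum_circulant:
  assumes "j < n" "D \<subseteq> {..<n}"
  shows "(\<Sum>i\<in>filled_col (circulant n D v) n j. entry (circulant n D v) i j)
       = (\<Sum>d\<in>D. v ((j + n - d) mod n) d)"
proof -
  have "entry (circulant n D v) ((j + n - d) mod n) j = v ((j + n - d) mod n) d" if "d \<in> D" for d
    using assms that cyclic_diff_cyclic_diff_self[of j n d]
    by (auto simp: entry_def circulant_def)
  then show ?thesis
    using assms by (simp add: filled_col_circulant sum.reindex inj_on_cyclic_diff)
qed

lemma circulant_entry_bounds:
  assumes "bij_betw (\<lambda>(i, d). nat \<bar>v i d\<bar>) ({..<n} \<times> D) {1..N}"
    and "circulant n D v i j = Some x"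
  shows "x \<noteq> 0 \<and> \<bar>x\<bar> \<le> int N"
proof -
  from assms(2) have "(i, (j + n - i) mod n) \<in> {..<n} \<times> D" and x: "x = v i ((j + n - i) mod n)"
    by (auto simp: circulant_eq_Some_iff)
  then have "nat \<bar>x\<bar> \<in> {1..N}"
    using bij_betw_apply[OF assms(1)] by fastforce
  then show ?thesis by auto
qed

lemma circulant_unique_cell:
  assumes D: "D \<subseteq> {..<n}"
    and bij: "bij_betw (\<lambda>(i, d). nat \<bar>v i d\<bar>) ({..<n} \<times> D) {1..N}"
    and x: "1 \<le> x" "x \<le> int N"
  shows "\<exists>!(i, j). i < n \<and> j < n \<and> (circulant n D v i j = Some x \<or> circulant n D v i j = Some (-x))"
proof -
  let ?P = "\<lambda>(i, j). i < n \<and> j < n \<and> (circulant n D v i j = Some x \<or> circulant n D v i j = Some (-x))"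
  have hits: "?P (i, j) \<longleftrightarrow> i < n \<and> j < n \<and> (j + n - i) mod n \<in> D \<and> nat \<bar>v i ((j + n - i) mod n)\<bar> = nat x"
    for i j using x by (auto simp: circulant_eq_Some_iff abs_if)
  from x have "nat x \<in> {1..N}" by (simp add: le_nat_iff nat_le_iff)
  then have "nat x \<in> (\<lambda>(i, d). nat \<bar>v i d\<bar>) ` ({..<n} \<times> D)"
    using bij_betw_imp_surj_on[OF bij] by simp
  then obtain i d where id: "(i, d) \<in> {..<n} \<times> D" "nat \<bar>v i d\<bar> = nat x"
    by auto
  show ?thesis
  proof (rule ex1I[of _ "(i, (i + d) mod n)"])
    show "?P (i, (i + d) mod n)"
      using id D by (subst hits) (auto simp: cyclic_diff_add_mod)
  next
    fix c assume "?P c"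
    then obtain i' j' where c: "c = (i', j')" and i'j': "i' < n" "j' < n"
      and d': "(j' + n - i') mod n \<in> D" "nat \<bar>v i' ((j' + n - i') mod n)\<bar> = nat x"
      using hits by (cases c) blast
    have "(i', (j' + n - i') mod n) = (i, d)"
      using inj_onD[OF bij_betw_imp_inj_on[OF bij], of "(i', (j' + n - i') mod n)" "(i, d)"]
        id d' i'j' by auto
    then show "c = (i, (i + d) mod n)"
      using c i'j' add_cyclic_diff_mod by auto
  qed
qed

theorem is_heffter_circulant:
  assumes D: "D \<subseteq> {..<n}" "card D = k"
    and abs_bij: "bij_betw (\<lambda>(i, d). nat \<bar>v i d\<bar>) ({..<n} \<times> D) {1..n * k}"
    and rows: "\<And>i. i < n \<Longrightarrow> (\<Sum>d\<in>D. v i d) mod int (2 * n * k + 1) = 0"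
    and cols: "\<And>j. j < n \<Longrightarrow> (\<Sum>d\<in>D. v ((j + n - d) mod n) d) mod int (2 * n * k + 1) = 0"
  shows "is_heffter n k (circulant n D v)"
  unfolding is_heffter_def
  using D rows cols circulant_entry_bounds[OF abs_bij] circulant_unique_cell[OF D(1) abs_bij]
  by (simp add: card_filled_row_circulant card_filled_col_circulant
      row_sum_circulant col_sum_circulant)

lemma bij_betw_block_offset:
  fixes b :: "'d \<Rightarrow> nat" and r :: "'d \<Rightarrow> nat \<Rightarrow> nat"
  assumes b: "bij_betw b D {..<k}" and r: "\<And>d. d \<in> D \<Longrightarrow> bij_betw (r d) {..<n} {..<n}"
  shows "bij_betw (\<lambda>(i, d). b d * n + 1 + r d i) ({..<n} \<times> D) {1..n * k}"
proof -
  let ?f = "\<lambda>(i, d). b d * n + 1 + r d i"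
  have r_lt: "r d i < n" if "d \<in> D" "i < n" for d i
    using bij_betw_apply[OF r[OF that(1)]] that(2) by simp
  have "inj_on ?f ({..<n} \<times> D)"
  proof (rule inj_onI, clarsimp)
    fix i d i' d'
    assume id: "i < n" "d \<in> D" "i' < n" "d' \<in> D"
      and eq: "b d * n + r d i = b d' * n + r d' i'"
    have "b d = b d'"
      using arg_cong[OF eq, of "\<lambda>m. m div n"] r_lt id by simp
    then have "d = d'"
      using bij_betw_imp_inj_on[OF b] id by (simp add: inj_on_eq_iff)
    moreover have "r d i = r d i'"
      using eq \<open>b d = b d'\<close> \<open>d = d'\<close> by simp
    ultimately show "i = i' \<and> d = d'"
      using bij_betw_imp_inj_on[OF r[OF id(2)]] id by (simp add: inj_on_eq_iff)
  qed
  moreover have "?f ` ({..<n} \<times> D) \<subseteq> {1..n * k}"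
  proof -
    have "b d * n + 1 + r d i \<le> n * k" if "i < n" "d \<in> D" for i d
    proof -
      have "b d + 1 \<le> k" "r d i < n"
        using bij_betw_apply[OF b, of d] r_lt that by (auto simp: Suc_le_eq)
      then have "b d * n + n \<le> k * n"
        using mult_le_mono1[of "b d + 1" k n] by simp
      with \<open>r d i < n\<close> show ?thesis
        by (simp add: mult.commute)
    qed
    then show ?thesis by auto
  qed
  moreover have "card ({..<n} \<times> D) = card {1..n * k}"
    using bij_betw_same_card[OF b] by (simp add: card_cartesian_product)
  ultimately show ?thesis
    by (simp add: bij_betw_def card_image card_subset_eq)
qed

definition heffter_diagonals :: "nat \<Rightarrow> nat set" where
  "heffter_diagonals k = {0, 1, 2, 3, 4, 6} \<union> {7..k}"

definition diagonal_block :: "nat \<Rightarrow> nat \<Rightarrow> nat" where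
  "diagonal_block k d = (if d \<le> 4 then k - 6 + d else if d = 6 then k - 1 else d - 7)"

definition diagonal_sign :: "nat \<Rightarrow> int" where
  "diagonal_sign d =
     (if d = 0 \<or> d = 2 then -1 else if d < 7 then 1
      else if (d - 7) mod 4 = 0 \<or> (d - 7) mod 4 = 3 then 1 else -1)"

definition diagonal_shift :: "nat \<Rightarrow> nat" where
  "diagonal_shift d =
     (if d = 1 \<or> d = 6 then 0 else if d = 0 \<or> d = 3 then 1 else if d < 7 then 2
      else if (d - 7) mod 4 < 2 then 2 else 0)"

definition diagonal_offset :: "nat \<Rightarrow> nat \<Rightarrow> nat \<Rightarrow> nat" where
  "diagonal_offset n d i =
     (let r = (i + n - diagonal_shift d) mod n in if d = 6 then n - 1 - r else r)"

definition heffter_value :: "nat \<Rightarrow> nat \<Rightarrow> nat \<Rightarrow> nat \<Rightarrow> int" where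
  "heffter_value n k i d = diagonal_sign d * int (diagonal_block k d * n + 1 + diagonal_offset n d i)"

definition heffter_array :: "nat \<Rightarrow> nat \<Rightarrow> parray" where
  "heffter_array n k = circulant n (heffter_diagonals k) (heffter_value n k)"

lemma heffter_diagonals_subset: "6 \<le> k \<Longrightarrow> k < n \<Longrightarrow> heffter_diagonals k \<subseteq> {..<n}"
  by (auto simp: heffter_diagonals_def)

lemma card_heffter_diagonals:
  assumes "6 \<le> k"
  shows "card (heffter_diagonals k) = k"
proof -
  have "card ({0, 1, 2, 3, 4, 6} \<union> {7..k}) = 6 + (k - 6)"
    by (subst card_Un_disjoint) auto
  then show ?thesis
    using assms by (simp add: heffter_diagonals_def)
qed

lemma bij_betw_diagonal_block:
  assumes "6 \<le> k"
  shows "bij_betw (diagonal_block k) (heffter_diagonals k) {..<k}"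
proof -
  have "diagonal_block k ` heffter_diagonals k \<subseteq> {..<k}"
    using assms by (auto simp: heffter_diagonals_def diagonal_block_def)
  moreover have "m \<in> diagonal_block k ` heffter_diagonals k" if m: "m < k" for m
  proof -
    consider "m < k - 6" | "k - 6 \<le> m" "m \<le> k - 2" | "m = k - 1"
      using m by linarith
    then show ?thesis
    proof cases
      case 1
      then have "diagonal_block k (m + 7) = m" "m + 7 \<in> heffter_diagonals k"
        by (auto simp: diagonal_block_def heffter_diagonals_def)
      then show ?thesis by (metis image_eqI)
    next
      case 2
      then have "diagonal_block k (m + 6 - k) = m" "m + 6 - k \<in> heffter_diagonals k"
        using assms by (auto simp: diagonal_block_def heffter_diagonals_def)
      then show ?thesis by (metis image_eqI)
    next
      case 3
      then have "diagonal_block k 6 = m" "6 \<in> heffter_diagonals k"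
        by (auto simp: diagonal_block_def heffter_diagonals_def)
      then show ?thesis by (metis image_eqI)
    qed
  qed
  ultimately have image: "diagonal_block k ` heffter_diagonals k = {..<k}"
    by auto
  then have "inj_on (diagonal_block k) (heffter_diagonals k)"
    using assms by (intro eq_card_imp_inj_on) (auto simp: heffter_diagonals_def card_heffter_diagonals)
  with image show ?thesis
    by (simp add: bij_betw_def)
qed

lemma bij_betw_diagonal_offset:
  assumes "2 < n"
  shows "bij_betw (diagonal_offset n d) {..<n} {..<n}"
proof -
  let ?s = "diagonal_shift d"
  have s: "?s < n"
    using assms by (simp add: diagonal_shift_def)
  have "inj_on (diagonal_offset n d) {..<n}"
  proof (rule inj_onI)
    fix i i' assume i: "i \<in> {..<n}" "i' \<in> {..<n}"
      and eq: "diagonal_offset n d i = diagonal_offset n d i'"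
    have "(i + n - ?s) mod n = (i' + n - ?s) mod n"
    proof (cases "d = 6")
      case True
      have "(i + n - ?s) mod n < n" "(i' + n - ?s) mod n < n"
        using assms by simp_all
      moreover have "n - 1 - (i + n - ?s) mod n = n - 1 - (i' + n - ?s) mod n"
        using eq True by (simp add: diagonal_offset_def)
      ultimately show ?thesis by linarith
    qed (use eq in \<open>simp add: diagonal_offset_def\<close>)
    then show "i = i'"
      using add_cyclic_diff_mod[OF s] i by (metis lessThan_iff)
  qed
  moreover have "diagonal_offset n d ` {..<n} \<subseteq> {..<n}"
    using assms by (auto simp: diagonal_offset_def Let_def)
  ultimately show ?thesis
    by (simp add: bij_betw_def endo_inj_surj)
qed

lemma abs_diagonal_sign: "\<bar>diagonal_sign d\<bar> = 1"
  by (simp add: diagonal_sign_def)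

lemma nat_abs_heffter_value:
  "nat \<bar>heffter_value n k i d\<bar> = diagonal_block k d * n + 1 + diagonal_offset n d i"
  unfolding heffter_value_def abs_mult abs_diagonal_sign by (simp only: mult_1 abs_of_nat nat_int)

lemma bij_betw_abs_heffter_value:
  assumes "6 \<le> k" "2 < n"
  shows "bij_betw (\<lambda>(i, d). nat \<bar>heffter_value n k i d\<bar>) ({..<n} \<times> heffter_diagonals k) {1..n * k}"
  using bij_betw_block_offset[OF bij_betw_diagonal_block bij_betw_diagonal_offset] assms
  by (simp add: nat_abs_heffter_value)

lemma sum_quadruples_eq_0:
  fixes f :: "nat \<Rightarrow> 'a::comm_monoid_add"
  assumes "\<And>g. g < L \<Longrightarrow> f (a + 4 * g) + f (a + 4 * g + 1) + f (a + 4 * g + 2) + f (a + 4 * g + 3) = 0"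
  shows "sum f {a..<a + 4 * L} = 0"
  using assms
proof (induction L)
  case (Suc L)
  have "{a..<a + 4 * Suc L} = {a..<a + 4 * L} \<union> {a + 4 * L, a + 4 * L + 1, a + 4 * L + 2, a + 4 * L + 3}"
    by auto
  then have "sum f {a..<a + 4 * Suc L}
      = sum f {a..<a + 4 * L} + (f (a + 4 * L) + f (a + 4 * L + 1) + f (a + 4 * L + 2) + f (a + 4 * L + 3))"
    by (simp add: sum.union_disjoint add_ac)
  with Suc show ?case by simp
qed simp

lemma heffter_diagonals_split:
  "k = 6 + 4 * L \<Longrightarrow> heffter_diagonals k = {0, 1, 2, 3, 4, 6} \<union> {7..<7 + 4 * L}"
  by (auto simp: heffter_diagonals_def)

lemma diagonal_block_small:
  assumes "6 \<le> k"
  shows "diagonal_block k 0 = k - 6" "diagonal_block k 1 = k - 5" "diagonal_block k 2 = k - 4"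
    "diagonal_block k 3 = k - 3" "diagonal_block k 4 = k - 2" "diagonal_block k 6 = k - 1"
  using assms by (simp_all add: diagonal_block_def)

lemma heffter_value_small:
  assumes "6 \<le> k"
  shows "heffter_value n k i 0 = - int ((k - 6) * n + 1 + (i + n - 1) mod n)"
    and "heffter_value n k i 1 = int ((k - 5) * n + 1 + (i + n - 0) mod n)"
    and "heffter_value n k i 2 = - int ((k - 4) * n + 1 + (i + n - 2) mod n)"
    and "heffter_value n k i 3 = int ((k - 3) * n + 1 + (i + n - 1) mod n)"
    and "heffter_value n k i 4 = int ((k - 2) * n + 1 + (i + n - 2) mod n)"
    and "heffter_value n k i 6 = int ((k - 1) * n + 1 + (n - 1 - (i + n - 0) mod n))"
  unfolding heffter_value_def diagonal_block_small[OF assms]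
  by (simp_all add: diagonal_sign_def diagonal_offset_def diagonal_shift_def)

text \<open>In row \<open>i\<close> the diagonals \<open>7 + 4 g\<close>, \<open>8 + 4 g\<close> share an offset, as do \<open>9 + 4 g\<close>, \<open>10 + 4 g\<close>;
  in a column, whose cell on diagonal \<open>d\<close> lies in row \<open>(j - d) mod n\<close>, the pairs are
  \<open>7 + 4 g\<close>, \<open>9 + 4 g\<close> and \<open>8 + 4 g\<close>, \<open>10 + 4 g\<close>. Either way the quadruple sums to \<open>0\<close>.\<close>

lemma heffter_value_quadruple:
  "heffter_value n k i (7 + 4 * g) = int ((4 * g) * n + 1 + (i + n - 2) mod n)"
  "heffter_value n k i (8 + 4 * g) = - int ((4 * g + 1) * n + 1 + (i + n - 2) mod n)"
  "heffter_value n k i (9 + 4 * g) = - int ((4 * g + 2) * n + 1 + (i + n - 0) mod n)"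
  "heffter_value n k i (10 + 4 * g) = int ((4 * g + 3) * n + 1 + (i + n - 0) mod n)"
  by (simp_all add: heffter_value_def diagonal_sign_def diagonal_block_def diagonal_offset_def
      diagonal_shift_def mod_Suc)

text \<open>The offsets satisfy \<open>a = d, b = f, c = e\<close> in a row and \<open>a = b, c = d, e = f\<close> in a column.\<close>

lemma six_diagonals_sum:
  fixes n k a b c d e f :: nat
  assumes "6 \<le> k" "f < n"
  shows "- int ((k - 6) * n + 1 + a) + int ((k - 5) * n + 1 + b) - int ((k - 4) * n + 1 + c)
       + int ((k - 3) * n + 1 + d) + int ((k - 2) * n + 1 + e) + int ((k - 1) * n + 1 + (n - 1 - f))
       = int (2 * n * k + 1) + (int b + int d + int e) - (int a + int c + int f)"
proof -
  obtain m y where "k = m + 6" "n = f + 1 + y"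
    using assms by (metis add.commute le_Suc_ex less_imp_Suc_add add_Suc_right plus_1_eq_Suc)
  then show ?thesis
    by (simp add: algebra_simps)
qed

lemma sum_heffter_diagonals:
  fixes f :: "nat \<Rightarrow> 'a::comm_monoid_add"
  assumes "k = 6 + 4 * L"
  shows "sum f (heffter_diagonals k) = f 0 + f 1 + f 2 + f 3 + f 4 + f 6 + sum f {7..<7 + 4 * L}"
  unfolding heffter_diagonals_split[OF assms] by (simp add: sum.union_disjoint add_ac)

lemma heffter_row_sum:
  assumes k: "k = 6 + 4 * L" and n: "0 < n"
  shows "(\<Sum>d\<in>heffter_diagonals k. heffter_value n k i d) = int (2 * n * k + 1)"
proof -
  have k6: "6 \<le> k" using k by simp
  have "(\<Sum>d\<in>{7..<7 + 4 * L}. heffter_value n k i d) = 0"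
    by (rule sum_quadruples_eq_0) (simp add: heffter_value_quadruple, simp add: algebra_simps)
  moreover have "heffter_value n k i 0 + heffter_value n k i 1 + heffter_value n k i 2
      + heffter_value n k i 3 + heffter_value n k i 4 + heffter_value n k i 6 = int (2 * n * k + 1)"
    using six_diagonals_sum[OF k6, where n = n and a = "(i + n - 1) mod n" and b = "(i + n - 0) mod n"
        and c = "(i + n - 2) mod n" and d = "(i + n - 1) mod n" and e = "(i + n - 2) mod n"
        and f = "(i + n - 0) mod n"] n
    unfolding heffter_value_small[OF k6] by simp
  ultimately show ?thesis
    by (simp add: sum_heffter_diagonals[OF k])
qed

lemma heffter_col_sum:
  assumes k: "k = 6 + 4 * L" and n: "k < n"
  shows "(\<Sum>d\<in>heffter_diagonals k. heffter_value n k ((j + n - d) mod n) d) = int (2 * n * k + 1)"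
proof -
  have k6: "6 \<le> k" using k by simp
  have "(\<Sum>d\<in>{7..<7 + 4 * L}. heffter_value n k ((j + n - d) mod n) d) = 0"
  proof (rule sum_quadruples_eq_0)
    fix g assume "g < L"
    then have "7 + 4 * g + 3 \<le> n"
      using k n by linarith
    then show "heffter_value n k ((j + n - (7 + 4 * g)) mod n) (7 + 4 * g)
      + heffter_value n k ((j + n - (7 + 4 * g + 1)) mod n) (7 + 4 * g + 1)
      + heffter_value n k ((j + n - (7 + 4 * g + 2)) mod n) (7 + 4 * g + 2)
      + heffter_value n k ((j + n - (7 + 4 * g + 3)) mod n) (7 + 4 * g + 3) = 0"
      by (simp add: heffter_value_quadruple cyclic_diff_cyclic_diff, simp add: algebra_simps)
  qed
  moreover have "heffter_value n k ((j + n - 0) mod n) 0 + heffter_value n k ((j + n - 1) mod n) 1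
      + heffter_value n k ((j + n - 2) mod n) 2 + heffter_value n k ((j + n - 3) mod n) 3
      + heffter_value n k ((j + n - 4) mod n) 4 + heffter_value n k ((j + n - 6) mod n) 6
      = int (2 * n * k + 1)"
    using six_diagonals_sum[OF k6, where n = n and a = "((j + n - 0) mod n + n - 1) mod n"
        and b = "((j + n - 1) mod n + n - 0) mod n" and c = "((j + n - 2) mod n + n - 2) mod n"
        and d = "((j + n - 3) mod n + n - 1) mod n" and e = "((j + n - 4) mod n + n - 2) mod n"
        and f = "((j + n - 6) mod n + n - 0) mod n"] cyclic_diff_cyclic_diff[of 0 1 n j] k6 n
    unfolding heffter_value_small[OF k6] by (simp add: cyclic_diff_cyclic_diff)
  ultimately show ?thesis
    by (simp add: sum_heffter_diagonals[OF k])
qed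

theorem theorem3p2:
  fixes n k :: nat
  assumes "n mod 4 = 1 \<or> n mod 4 = 3"
    and "k mod 4 = 2"
    and "n > k" and "k \<ge> 6"
  shows "\<exists>A. is_heffter n k A"
proof -
  have "\<exists>L. k = 6 + 4 * L"
    using assms(2,4) by presburger
  then obtain L where k: "k = 6 + 4 * L" ..
  have "is_heffter n k (heffter_array n k)"
    unfolding heffter_array_def
  proof (rule is_heffter_circulant)
    show "heffter_diagonals k \<subseteq> {..<n}" "card (heffter_diagonals k) = k"
      using assms heffter_diagonals_subset card_heffter_diagonals by auto
    show "bij_betw (\<lambda>(i, d). nat \<bar>heffter_value n k i d\<bar>) ({..<n} \<times> heffter_diagonals k) {1..n * k}"
      using assms by (intro bij_betw_abs_heffter_value) auto
    show "(\<Sum>d\<in>heffter_diagonals k. heffter_value n k i d) mod int (2 * n * k + 1) = 0" for i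
      using assms by (simp add: heffter_row_sum[OF k])
    show "(\<Sum>d\<in>heffter_diagonals k. heffter_value n k ((j + n - d) mod n) d) mod int (2 * n * k + 1) = 0"
      for j using assms by (simp add: heffter_col_sum[OF k])
  qed
  then show ?thesis by blast
qed

end
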